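(* In the setting of the context, assume that $P_1,P_2,P_m$ are Poisson distributions with parameters $\lambda_1,\lambda_2,\lambda_m>0$ respectively, that the thresholds depend only on the total number of neighbours, $K_j(a,b)=K_j(a+b)$, and that the seeding depends only on the total number of neighbours, $\alpha_j(a,b)=\alpha_j(a+b)$, for $j\in\{1,2\}$. Then the solution $\boldsymbol{\mu}(t)$ of $\frac{d\boldsymbol{\mu}}{dt}=F(\boldsymbol{\mu})-\boldsymbol{\mu}$, $\boldsymbol{\mu}(0)=(1,1,1,1)$, satisfies $\mu^{(1,1)}(t)=\mu^{(2,1)}(t)$ and $\mu^{(2,2)}(t)=\mu^{(1,2)}(t)$ for all $t\ge0$, so that the dimension of the differential equations reduces to $2$.
   Context: Two-community threshold adoption model. $P_1,P_2,P_m$ are probability distributions on $\mathbb{Z}_{\ge 0}$ with finite means $\lambda_1,\lambda_2,\lambda_m>0$: $P_j$ is the degree distribution inside community $j\in\{1,2\}$, $P_m$ that of links between communities. For $j\in\{1,2\}$, $-j$ denotes the other community. $K_j(a,b)\ge0$ is the threshold of a node of community $j$ with $a$ neighbours in its own and $b$ in the other community; $\alpha_j(a,b)\in[0,1]$ is its seeding probability. $Bi(k;n,p)=\binom nk p^k(1-p)^{n-k}$. Vectors $\boldsymbol{\mu}=(\mu^{(1,1)},\mu^{(1,2)},\mu^{(2,1)},\mu^{(2,2)})\in[0,1]^4$. $F:[0,1]^4\to[0,1]^4$ has components, for $j\in\{1,2\}$, $$F_{(j,j)}(\boldsymbol{\mu})=\sum_{a\ge1,b\ge0}\frac{aP_j(a)}{\lambda_j}P_m(b)(1-\alpha_j(a,b))\sum_{\substack{0\le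 u\le a-1,\ 0\le v\le b\\ u+v<K_j(a,b)}}Bi(u;a-1,1-\mu^{(j,j)})\,Bi(v;b,1-\mu^{(j,-j)}),$$ $$F_{(j,-j)}(\boldsymbol{\mu})=\sum_{a\ge0,b\ge1}P_{-j}(a)\frac{bP_m(b)}{\lambda_m}(1-\alpha_{-j}(a,b))\sum_{\substack{0\le u\le a,\ 0\le v\le b-1\\ u+v<K_{-j}(a,b)}}Bi(u;a,1-\mu^{(-j,-j)})\,Bi(v;b-1,1-\mu^{(-j,j)}).$$ The ODE $\dot{\boldsymbol{\mu}}=F(\boldsymbol{\mu})-\boldsymbol{\mu}$ started at $(1,1,1,1)$ describes (up to time change) the evolution of the adoption cascade. *)

theory Defs
  imports "HOL-Analysis.Analysis"
begin

definition Bi :: "nat \<Rightarrow> nat \<Rightarrow> real \<Rightarrow> real" where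
  "Bi k n p = real (n choose k) * p ^ k * (1 - p) ^ (n - k)"

definition poisson :: "real \<Rightarrow> nat \<Rightarrow> real" where
  "poisson l k = exp (- l) * l ^ k / fact k"

text \<open>Component F_(j,j).  Arguments: Pj, lambda_j, Pm, K_j, alpha_j (as functions of
  (a,b) = (own-community neighbours, other-community neighbours)),
  x = mu^(j,j), y = mu^(j,-j).\<close>
definition Fself ::
  "(nat \<Rightarrow> real) \<Rightarrow> real \<Rightarrow> (nat \<Rightarrow> real) \<Rightarrow> (nat \<Rightarrow> nat \<Rightarrow> real) \<Rightarrow> (nat \<Rightarrow> nat \<Rightarrow> real)
   \<Rightarrow> real \<Rightarrow> real \<Rightarrow> real" where
  "Fself Pj lj Pm K al x y =
     (\<Sum>\<^sub>\<infinity>(a,b)\<in>{(a,b). (1::nat) \<le> a}.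
        real a * Pj a / lj * Pm b * (1 - al a b) *
        (\<Sum>(u,v)\<in>{(u,v). u \<le> a - 1 \<and> v \<le> b \<and> real (u + v) < K a b}.
            Bi u (a - 1) (1 - x) * Bi v b (1 - y)))"

text \<open>Component F_(j,-j).  Arguments: P_{-j}, Pm, lambda_m, K_{-j}, alpha_{-j},
  x = mu^(-j,-j), y = mu^(-j,j).\<close>
definition Fcross ::
  "(nat \<Rightarrow> real) \<Rightarrow> (nat \<Rightarrow> real) \<Rightarrow> real \<Rightarrow> (nat \<Rightarrow> nat \<Rightarrow> real) \<Rightarrow> (nat \<Rightarrow> nat \<Rightarrow> real)
   \<Rightarrow> real \<Rightarrow> real \<Rightarrow> real" where
  "Fcross Po Pm lm K al x y =
     (\<Sum>\<^sub>\<infinity>(a,b)\<in>{(a,b). (1::nat) \<le> b}.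
        Po a * (real b * Pm b / lm) * (1 - al a b) *
        (\<Sum>(u,v)\<in>{(u,v). u \<le> a \<and> v \<le> b - 1 \<and> real (u + v) < K a b}.
            Bi u a (1 - x) * Bi v (b - 1) (1 - y)))"

end

theory Submission
  imports Defs
begin

text \<open>For Poisson degrees, shifting the size-biased degree law down by one gives back the
  same Poisson law: \<open>(a+1) P(a+1) / \<lambda> = P(a)\<close>. So when thresholds and seeding depend only on
  the total degree, a node reached along an internal link and one reached along a cross link
  see identically distributed remaining neighbourhoods, and the components F(j,j) and F(-j,j)
  coincide as functions of \<open>\<mu>\<close>. Hence mu(1,1) and mu(2,1) solve \<open>x' = G t - x\<close> with the same
  forcing \<open>G\<close> and the same initial value; \<open>exp t\<close> times their difference has derivative zero,
  so it vanishes.\<close>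

lemma poisson_size_biased:
  assumes "l > 0"
  shows "real (Suc a) * poisson l (Suc a) / l = poisson l a"
  using assms unfolding poisson_def fact_Suc of_nat_mult
  by (simp add: field_simps del: of_nat_Suc)

lemma Fself_eq_Fcross_poisson:
  assumes "l > 0" and "lm > 0"
  shows "Fself (poisson l) l (poisson lm) (\<lambda>a b. K (a + b)) (\<lambda>a b. al (a + b)) x y
       = Fcross (poisson l) (poisson lm) lm (\<lambda>a b. K (a + b)) (\<lambda>a b. al (a + b)) x y"
proof -
  define H where "H = (\<lambda>(a::nat, b::nat). poisson l a * poisson lm b * (1 - al (a + b + 1)) *
        (\<Sum>(u,v)\<in>{(u,v). u \<le> a \<and> v \<le> b \<and> real (u + v) < K (a + b + 1)}.
            Bi u a (1 - x) * Bi v b (1 - y)))"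
  have shift_own: "bij_betw (\<lambda>(a::nat, b::nat). (Suc a, b)) UNIV {(a,b). 1 \<le> a}"
    by (rule bij_betwI[where g="\<lambda>(a,b). (a - 1, b)"]) auto
  have shift_cross: "bij_betw (\<lambda>(a::nat, b::nat). (a, Suc b)) UNIV {(a,b). 1 \<le> b}"
    by (rule bij_betwI[where g="\<lambda>(a,b). (a, b - 1)"]) auto
  have "Fself (poisson l) l (poisson lm) (\<lambda>a b. K (a + b)) (\<lambda>a b. al (a + b)) x y = infsum H UNIV"
    unfolding Fself_def infsum_reindex_bij_betw[OF shift_own, symmetric]
    by (rule infsum_cong) (auto simp: H_def poisson_size_biased[OF assms(1)]
                                  simp del: of_nat_Suc times_divide_eq_left)
  moreover have "Fcross (poisson l) (poisson lm) lm (\<lambda>a b. K (a + b)) (\<lambda>a b. al (a + b)) x y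
      = infsum H UNIV"
    unfolding Fcross_def infsum_reindex_bij_betw[OF shift_cross, symmetric]
    by (rule infsum_cong) (auto simp: H_def poisson_size_biased[OF assms(2)]
                                  simp del: of_nat_Suc times_divide_eq_right)
  ultimately show ?thesis by simp
qed

lemma relaxation_solutions_unique:
  fixes f g G :: "real \<Rightarrow> real"
  assumes "f 0 = g 0"
    and f': "\<And>t. t \<ge> 0 \<Longrightarrow> (f has_real_derivative (G t - f t)) (at t within {0..})"
    and g': "\<And>t. t \<ge> 0 \<Longrightarrow> (g has_real_derivative (G t - g t)) (at t within {0..})"
  shows "\<forall>t\<ge>0. f t = g t"
proof -
  define h where "h t = exp t * (f t - g t)" for t
  have "(h has_real_derivative 0) (at t within {0..})" if "t \<in> {0..}" for t
  proof -
    from that have t: "t \<ge> 0" by simp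
    have "(h has_real_derivative exp t * (f t - g t) + exp t * ((G t - f t) - (G t - g t)))
          (at t within {0..})"
      unfolding h_def
      using DERIV_mult[OF DERIV_exp[THEN has_field_derivative_at_within]
                          DERIV_diff[OF f'[OF t] g'[OF t]]]
      by (simp add: mult.commute)
    then show ?thesis by (simp add: algebra_simps)
  qed
  then obtain c where c: "\<forall>t\<in>{0..}. h t = c"
    using has_field_derivative_zero_constant[of "{0..}" h] by auto
  with \<open>f 0 = g 0\<close> have "c = 0" by (auto simp: h_def)
  with c show ?thesis by (auto simp: h_def)
qed

theorem theorem9p1:
  fixes l1 l2 lm :: real
    and Kt1 Kt2 at1 at2 :: "nat \<Rightarrow> real"
    and m11 m12 m21 m22 :: "real \<Rightarrow> real"
  assumes "l1 > 0" and "l2 > 0" and "lm > 0"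
    and "\<And>n. Kt1 n \<ge> 0" and "\<And>n. Kt2 n \<ge> 0"
    and "\<And>n. 0 \<le> at1 n \<and> at1 n \<le> 1" and "\<And>n. 0 \<le> at2 n \<and> at2 n \<le> 1"
    and "m11 0 = 1" and "m12 0 = 1" and "m21 0 = 1" and "m22 0 = 1"
    and "\<And>t. t \<ge> 0 \<Longrightarrow> m11 t \<in> {0..1} \<and> m12 t \<in> {0..1} \<and> m21 t \<in> {0..1} \<and> m22 t \<in> {0..1}"
    and "\<And>t. t \<ge> 0 \<Longrightarrow> (m11 has_real_derivative
           (Fself (poisson l1) l1 (poisson lm) (\<lambda>a b. Kt1 (a + b)) (\<lambda>a b. at1 (a + b)) (m11 t) (m12 t)
            - m11 t)) (at t within {0..})"
    and "\<And>t. t \<ge> 0 \<Longrightarrow> (m12 has_real_derivative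
           (Fcross (poisson l2) (poisson lm) lm (\<lambda>a b. Kt2 (a + b)) (\<lambda>a b. at2 (a + b)) (m22 t) (m21 t)
            - m12 t)) (at t within {0..})"
    and "\<And>t. t \<ge> 0 \<Longrightarrow> (m21 has_real_derivative
           (Fcross (poisson l1) (poisson lm) lm (\<lambda>a b. Kt1 (a + b)) (\<lambda>a b. at1 (a + b)) (m11 t) (m12 t)
            - m21 t)) (at t within {0..})"
    and "\<And>t. t \<ge> 0 \<Longrightarrow> (m22 has_real_derivative
           (Fself (poisson l2) l2 (poisson lm) (\<lambda>a b. Kt2 (a + b)) (\<lambda>a b. at2 (a + b)) (m22 t) (m21 t)
            - m22 t)) (at t within {0..})"
  shows "\<forall>t\<ge>0. m11 t = m21 t \<and> m22 t = m12 t"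
proof -
  have "\<forall>t\<ge>0. m11 t = m21 t"
    using relaxation_solutions_unique[OF _ assms(13)[unfolded Fself_eq_Fcross_poisson[OF assms(1,3)]]
                                          assms(15)] assms(8,10)
    by simp
  moreover have "\<forall>t\<ge>0. m22 t = m12 t"
    using relaxation_solutions_unique[OF _ assms(16)[unfolded Fself_eq_Fcross_poisson[OF assms(2,3)]]
                                          assms(14)] assms(9,11)
    by simp
  ultimately show ?thesis by blast
qed

end
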